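(* Let $d\ge1$, $0<\mu\le L$, let $A\in\mathbb{R}^{d\times d}$ be symmetric with $\mu I\preceq A\preceq LI$, $b\in\mathbb{R}^d$, $f(x)=\frac12x^\top Ax+b^\top x$, and let $\{x_t\},\{G_t\}$ be generated by Sharpened-BFGS for quadratics from an arbitrary $x_0$, assuming $\nabla f(x_t)\neq0$ for all $t$ considered. Then for all $t\ge1$, $$\lambda_t\le\left(1-\frac{\mu}{dL}\right)^{\frac{t(t-1)}{4}}\left(\frac{dL}{t\mu}\right)^{\frac t2}\lambda_0,$$ where $\lambda_t:=\lambda_f(x_t)$.
   Context: For symmetric positive definite $A,G\in\mathbb{R}^{d\times d}$ and $u\in\mathbb{R}^d\setminus\{0\}$, the BFGS operator is $\mathrm{BFGS}(A,G,u):=G-\frac{Guu^\top G}{u^\top Gu}+\frac{Auu^\top A}{u^\top Au}$. The greedy vector is $\bar u(A,G):=\arg\max_{u\in\{e_1,\dots,e_d\}}\frac{u^\top Gu}{u^\top Au}$ (ties broken arbitrarily). The Newton decrement is $\lambda_f(x):=\sqrt{\nabla f(x)^\top\nabla^2 f(x)^{-1}\nabla f(x)}$. Sharpened-BFGS for quadratics: set $G_0=LI$; for $t=0,1,2,\dots$: $x_{t+1}=x_t-G_t^{-1}\nabla f(x_t)$, $s_t=x_{t+1}-x_t$, $\bar G_t=\mathrm{BFGS}(A,G_t,s_t)$, $\bar u=\bar u(A,\bar G_t)$, $G_{t+1}=\mathrm{BFGS}(A,\bar G_t,\bar u)$. *)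

theory Defs
  imports "HOL-Analysis.Analysis"
begin

definition outer :: "real^'n \<Rightarrow> real^'n \<Rightarrow> real^'n^'n" where
  "outer u v = (\<chi> i j. u $ i * v $ j)"

definition BFGS :: "real^'n^'n \<Rightarrow> real^'n^'n \<Rightarrow> real^'n \<Rightarrow> real^'n^'n" where
  "BFGS A G u = G - (1 / (u \<bullet> (G *v u))) *\<^sub>R (G ** outer u u ** G)
                  + (1 / (u \<bullet> (A *v u))) *\<^sub>R (A ** outer u u ** A)"

definition greedy_vec :: "real^'n^'n \<Rightarrow> real^'n^'n \<Rightarrow> real^'n \<Rightarrow> bool" where
  "greedy_vec A G u \<longleftrightarrow> u \<in> range (\<lambda>i. axis i 1) \<and>
     (\<forall>v \<in> range (\<lambda>i. axis i 1).
        (v \<bullet> (G *v v)) / (v \<bullet> (A *v v)) \<le> (u \<bullet> (G *v u)) / (u \<bullet> (A *v u)))"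

definition quad_f :: "real^'n^'n \<Rightarrow> real^'n \<Rightarrow> real^'n \<Rightarrow> real" where
  "quad_f A b x = (1/2) * (x \<bullet> (A *v x)) + b \<bullet> x"

definition quad_grad :: "real^'n^'n \<Rightarrow> real^'n \<Rightarrow> real^'n \<Rightarrow> real^'n" where
  "quad_grad A b x = A *v x + b"

text \<open>Newton decrement lambda_f(x) = sqrt(grad^T (Hess)^{-1} grad); Hessian of quad_f is A
  (for symmetric A).\<close>
definition newton_decrement :: "real^'n^'n \<Rightarrow> real^'n \<Rightarrow> real^'n \<Rightarrow> real" where
  "newton_decrement A b x = sqrt (quad_grad A b x \<bullet> (matrix_inv A *v quad_grad A b x))"

definition sharpened_bfgs ::
  "real^'n^'n \<Rightarrow> real^'n \<Rightarrow> real \<Rightarrow> (nat \<Rightarrow> real^'n) \<Rightarrow> (nat \<Rightarrow> real^'n^'n) \<Rightarrow> bool" where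
  "sharpened_bfgs A b L x G \<longleftrightarrow>
     G 0 = L *\<^sub>R mat 1 \<and>
     (\<forall>t. x (Suc t) = x t - matrix_inv (G t) *v quad_grad A b (x t) \<and>
          (let s = x (Suc t) - x t; Gbar = BFGS A (G t) s in
           \<exists>u. greedy_vec A Gbar u \<and> G (Suc t) = BFGS A Gbar u))"

end

theory Submission
  imports Defs
begin

(*
  Along the iteration A <= G_t in the Loewner order, since every BFGS update
  preserves it; hence the potential sigma(G) = tr(A^-1 (G - A)) stays nonnegative. An update of G
  along u lowers sigma by theta(G,u) = u^T G A^-1 G u / u^T G u - 1. The secant update along
  s_t = -G_t^-1 grad f(x_t) consumes theta_t and multiplies the squared Newton decrement by at
  most theta_t; the greedy update then multiplies sigma by at most q = 1 - mu/(dL). So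
  sum_t theta_t / q^t <= sigma(G_0) <= dL/mu, and AM-GM bounds prod_{k<t} theta_k by
  q^(t(t-1)/2) (dL/(t mu))^t.
*)

lemma symmetric_inner_commute:
  fixes M :: "real^'n^'n"
  assumes "transpose M = M"
  shows "x \<bullet> (M *v y) = y \<bullet> (M *v x)"
proof -
  have "x \<bullet> (M *v y) = (transpose M *v x) \<bullet> y"
    by (simp add: dot_lmul_matrix[symmetric])
  then show ?thesis using assms by (simp add: inner_commute)
qed

lemma symmetric_iff_inner_commute:
  "transpose (M::real^'n^'n) = M \<longleftrightarrow> (\<forall>x y. x \<bullet> (M *v y) = y \<bullet> (M *v x))"
proof
  assume "\<forall>x y. x \<bullet> (M *v y) = y \<bullet> (M *v x)"
  then have "M $ i $ j = M $ j $ i" for i j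
    by (metis (no_types) cart_eq_inner_axis inner_axis' matrix_vector_mult_basis column_def
        vec_lambda_beta inner_commute)
  then show "transpose M = M" by (simp add: vec_eq_iff transpose_def)
qed (use symmetric_inner_commute in blast)

definition pos_semidef :: "real^'n^'n \<Rightarrow> bool" where
  "pos_semidef M \<longleftrightarrow> transpose M = M \<and> (\<forall>v. 0 \<le> v \<bullet> (M *v v))"

lemma trace_eq_sum_axis: "trace (M::real^'n^'n) = (\<Sum>i\<in>UNIV. axis i 1 \<bullet> (M *v axis i 1))"
  by (simp add: trace_def matrix_vector_mult_basis column_def inner_axis')

lemma outer_mult_vector: "outer u w *v v = (w \<bullet> v) *\<^sub>R (u::real^'n)"
  by (simp add: vec_eq_iff outer_def matrix_vector_mult_def inner_vec_def sum_distrib_left mult_ac)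

lemma trace_mult_outer: "trace (P ** outer u w) = w \<bullet> (P *v (u::real^'n))"
  by (simp add: trace_def matrix_matrix_mult_def outer_def inner_vec_def matrix_vector_mult_def
      sum_distrib_left mult_ac)

lemma trace_scaleR: "trace (c *\<^sub>R M) = c *\<^sub>R trace (M::'a::real_algebra_1^'n^'n)"
  by (simp add: trace_def scaleR_sum_right)

lemma matrix_diff_ldistrib: "(P::'a::ring_1^'n^'m) ** (M - N) = P ** M - P ** N"
  by (simp add: matrix_matrix_mult_def vec_eq_iff algebra_simps sum_subtractf)

lemma matrix_vector_mult_minus: "(M::'a::ring_1^'n^'m) *v (- v) = - (M *v v)"
  by (simp add: vec_eq_iff matrix_vector_mult_def sum_negf)

lemma matrix_diff_rdistrib: "((P::'a::ring_1^'n^'m) - Q) ** M = P ** M - Q ** M"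
  by (simp add: matrix_matrix_mult_def vec_eq_iff algebra_simps sum_subtractf)

lemma quadratic_form_add_scaled:
  fixes M :: "real^'n^'n"
  assumes "transpose M = M"
  shows "(x + c *\<^sub>R y) \<bullet> (M *v (x + c *\<^sub>R y))
           = x \<bullet> (M *v x) + 2 * c * (y \<bullet> (M *v x)) + c\<^sup>2 * (y \<bullet> (M *v y))"
  using symmetric_inner_commute[OF assms, of x y]
  by (simp add: matrix_vector_right_distrib matrix_vector_mult_scaleR inner_add_left
      inner_add_right algebra_simps power2_eq_square)

lemma pos_semidef_cauchy_schwarz:
  assumes "pos_semidef M"
  shows "(x \<bullet> (M *v z))\<^sup>2 \<le> (x \<bullet> (M *v x)) * (z \<bullet> (M *v z))"
proof -
  have sym: "transpose M = M" and psd: "\<And>v. 0 \<le> v \<bullet> (M *v v)"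
    using assms by (auto simp: pos_semidef_def)
  have xz: "x \<bullet> (M *v z) = z \<bullet> (M *v x)" by (rule symmetric_inner_commute[OF sym])
  have q: "0 \<le> x \<bullet> (M *v x) + 2 * c * (z \<bullet> (M *v x)) + c\<^sup>2 * (z \<bullet> (M *v z))" for c
    using psd[of "x + c *\<^sub>R z"] by (simp only: quadratic_form_add_scaled[OF sym])
  show ?thesis
  proof (cases "z \<bullet> (M *v z) = 0")
    case True
    have "z \<bullet> (M *v x) = 0"
    proof (rule ccontr)
      assume nz: "z \<bullet> (M *v x) \<noteq> 0"
      have "0 \<le> x \<bullet> (M *v x) + 2 * (- (x \<bullet> (M *v x) + 1) / (2 * (z \<bullet> (M *v x)))) * (z \<bullet> (M *v x))"
        using q[of "- (x \<bullet> (M *v x) + 1) / (2 * (z \<bullet> (M *v x)))"] True by simp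
      then show False using nz by (simp add: field_simps)
    qed
    then show ?thesis using xz True by simp
  next
    case False
    then have pos: "0 < z \<bullet> (M *v z)" using psd[of z] by simp
    have "0 \<le> x \<bullet> (M *v x) + 2 * (- (z \<bullet> (M *v x)) / (z \<bullet> (M *v z))) * (z \<bullet> (M *v x))
              + (- (z \<bullet> (M *v x)) / (z \<bullet> (M *v z)))\<^sup>2 * (z \<bullet> (M *v z))"
      by (rule q)
    then have "(z \<bullet> (M *v x))\<^sup>2 \<le> (x \<bullet> (M *v x)) * (z \<bullet> (M *v z))"
      using pos by (simp add: field_simps power2_eq_square)
    then show ?thesis using xz by simp
  qed
qed

text \<open>Induction on the number of nonzero columns of \<open>D\<close>: subtracting the rank-one matrix
  \<open>w w\<^sup>T / c\<close> built from a nonzero column \<open>w = D e\<^sub>i\<close>, \<open>c = e\<^sub>i\<^sup>T D e\<^sub>i\<close>, keeps \<open>D\<close> positive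
  semidefinite, kills column \<open>i\<close>, and removes \<open>w\<^sup>T M w / c \<ge> 0\<close> from the trace.\<close>
lemma trace_mult_pos_semidef_nonneg:
  fixes M D :: "real^'n^'n"
  assumes M: "\<And>v. 0 \<le> v \<bullet> (M *v v)" and D: "pos_semidef D"
  shows "0 \<le> trace (M ** D)"
  using D
proof (induction "card {i. D *v axis i 1 \<noteq> 0}" arbitrary: D rule: less_induct)
  case less
  show ?case
  proof (cases "\<exists>i. D *v axis i 1 \<noteq> 0")
    case False
    then show ?thesis by (simp add: trace_eq_sum_axis matrix_vector_mul_assoc[symmetric])
  next
    case True
    then obtain i where i: "D *v axis i 1 \<noteq> 0" by blast
    have symD: "transpose D = D" and psdD: "\<And>v. 0 \<le> v \<bullet> (D *v v)"
      using less.prems by (auto simp: pos_semidef_def)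
    define w where "w = D *v axis i 1"
    define c where "c = axis i 1 \<bullet> w"
    have cs: "(v \<bullet> w)\<^sup>2 \<le> (v \<bullet> (D *v v)) * c" for v
      unfolding w_def c_def by (rule pos_semidef_cauchy_schwarz[OF less.prems])
    have "c \<noteq> 0"
    proof
      assume "c = 0"
      then have "(w \<bullet> w)\<^sup>2 \<le> 0" using cs[of w] by simp
      then show False using i w_def by simp
    qed
    then have c: "0 < c" using psdD[of "axis i 1"] unfolding c_def w_def by simp
    define D' where "D' = D - (1 / c) *\<^sub>R outer w w"
    have D'v: "D' *v v = D *v v - ((w \<bullet> v) / c) *\<^sub>R w" for v
      by (simp add: D'_def matrix_vector_mult_diff_rdistrib scaleR_matrix_vector_assoc[symmetric]
          outer_mult_vector)
    have w_inner: "w \<bullet> v = axis i 1 \<bullet> (D *v v)" for v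
      using symmetric_inner_commute[OF symD] unfolding w_def by (metis inner_commute)
    have "pos_semidef D'"
      unfolding pos_semidef_def symmetric_iff_inner_commute D'v
    proof (intro conjI allI)
      fix v
      have "(v \<bullet> w)\<^sup>2 / c \<le> v \<bullet> (D *v v)" using cs[of v] c by (simp add: field_simps)
      then show "0 \<le> v \<bullet> (D *v v - ((w \<bullet> v) / c) *\<^sub>R w)"
        by (simp add: inner_diff_right power2_eq_square inner_commute)
    next
      fix u v
      show "u \<bullet> (D *v v - (w \<bullet> v / c) *\<^sub>R w) = v \<bullet> (D *v u - (w \<bullet> u / c) *\<^sub>R w)"
        using symmetric_inner_commute[OF symD, of u v] by (simp add: inner_diff_right inner_commute)
    qed
    moreover have "card {j. D' *v axis j 1 \<noteq> 0} < card {j. D *v axis j 1 \<noteq> 0}"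
    proof -
      have "{j. D' *v axis j 1 \<noteq> 0} \<subseteq> {j. D *v axis j 1 \<noteq> 0} - {i}"
      proof
        fix j assume "j \<in> {j. D' *v axis j 1 \<noteq> 0}"
        then have j: "D' *v axis j 1 \<noteq> 0" by simp
        have "D' *v axis i 1 = 0" using c by (simp add: D'v w_def c_def inner_commute)
        moreover have "D *v axis j 1 \<noteq> 0"
          using j w_inner[of "axis j 1"] by (auto simp: D'v)
        ultimately show "j \<in> {j. D *v axis j 1 \<noteq> 0} - {i}" using j by auto
      qed
      then have "card {j. D' *v axis j 1 \<noteq> 0} \<le> card ({j. D *v axis j 1 \<noteq> 0} - {i})"
        by (intro card_mono) auto
      also have "\<dots> < card {j. D *v axis j 1 \<noteq> 0}"
        using i by (intro card_Diff1_less) auto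
      finally show ?thesis .
    qed
    ultimately have "0 \<le> trace (M ** D')" using less.hyps by blast
    moreover have "trace (M ** D) = trace (M ** D') + (w \<bullet> (M *v w)) / c"
      by (simp add: D'_def matrix_diff_ldistrib trace_sub matrix_scalar_ac trace_scaleR
          trace_mult_outer scaleR_matrix_vector_assoc[symmetric] matrix_vector_mult_scaleR)
    ultimately show ?thesis using M[of w] c by simp
  qed
qed

lemma invertible_matrix_inv_cancel:
  fixes M :: "real^'n^'n"
  assumes "invertible M"
  shows "M *v (matrix_inv M *v y) = y" "matrix_inv M *v (M *v y) = y"
proof -
  have "\<exists>M'. M ** M' = mat 1 \<and> M' ** M = mat 1" using assms by (simp add: invertible_def)
  then have "M ** matrix_inv M = mat 1 \<and> matrix_inv M ** M = mat 1"
    unfolding matrix_inv_def by (rule someI_ex)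
  then show "M *v (matrix_inv M *v y) = y" "matrix_inv M *v (M *v y) = y"
    by (simp_all add: matrix_vector_mul_assoc)
qed

lemma invertible_if_pos_def:
  fixes M :: "real^'n^'n"
  assumes "\<And>v. v \<noteq> 0 \<Longrightarrow> 0 < v \<bullet> (M *v v)"
  shows "invertible M"
proof -
  have "\<forall>x. M *v x = 0 \<longrightarrow> x = 0" using assms by force
  then show ?thesis using matrix_left_invertible_ker invertible_left_inverse by blast
qed

lemma BFGS_mult_vector:
  "BFGS A G u *v v = G *v v - ((u \<bullet> (G *v v)) / (u \<bullet> (G *v u))) *\<^sub>R (G *v u)
     + ((u \<bullet> (A *v v)) / (u \<bullet> (A *v u))) *\<^sub>R (A *v u)"
  by (simp add: BFGS_def matrix_vector_mult_add_rdistrib matrix_vector_mult_diff_rdistrib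
      scaleR_matrix_vector_assoc[symmetric] matrix_vector_mul_assoc[symmetric] outer_mult_vector
      matrix_vector_mult_scaleR)

lemma BFGS_eq_rank_two_update:
  assumes "transpose A = A" "transpose G = G"
  shows "BFGS A G u = G - (1 / (u \<bullet> (G *v u))) *\<^sub>R outer (G *v u) (G *v u)
                        + (1 / (u \<bullet> (A *v u))) *\<^sub>R outer (A *v u) (A *v u)"
  using symmetric_inner_commute[OF assms(1)] symmetric_inner_commute[OF assms(2)]
  by (simp add: matrix_eq BFGS_mult_vector matrix_vector_mult_add_rdistrib
      matrix_vector_mult_diff_rdistrib scaleR_matrix_vector_assoc[symmetric] outer_mult_vector
      inner_commute)

locale spectral_bounds =
  fixes A :: "real^'n^'n" and \<mu> L :: real
  assumes mu_pos: "0 < \<mu>" and symmetric: "transpose A = A"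
    and lower: "\<And>v. \<mu> * (v \<bullet> v) \<le> v \<bullet> (A *v v)"
    and upper: "\<And>v. v \<bullet> (A *v v) \<le> L * (v \<bullet> v)"
begin

abbreviation Ainv :: "real^'n^'n" where "Ainv \<equiv> matrix_inv A"

lemma mu_le_L: "\<mu> \<le> L"
  using lower[of "axis undefined 1"] upper[of "axis undefined 1"] by (simp add: inner_axis_axis)

lemma A_pos_def: "v \<noteq> 0 \<Longrightarrow> 0 < v \<bullet> (A *v v)"
  using lower[of v] mu_pos by (smt (verit) inner_gt_zero_iff mult_pos_pos)

lemma A_pos_semidef: "pos_semidef A"
  unfolding pos_semidef_def using symmetric A_pos_def by (metis less_eq_real_def inner_zero_left)

lemma inverse_cancel: "A *v (Ainv *v y) = y" "Ainv *v (A *v y) = y"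
  using invertible_matrix_inv_cancel[OF invertible_if_pos_def[OF A_pos_def]] by auto

lemma inverse_quadratic_form: "x \<bullet> (Ainv *v x) = (Ainv *v x) \<bullet> (A *v (Ainv *v x))"
  by (simp add: inverse_cancel inner_commute)

lemma pos_semidef_inverse: "pos_semidef Ainv"
  unfolding pos_semidef_def symmetric_iff_inner_commute
proof (intro conjI allI)
  fix x y
  have "x \<bullet> (Ainv *v y) = (Ainv *v y) \<bullet> (A *v (Ainv *v x))" by (simp add: inverse_cancel inner_commute)
  also have "\<dots> = (Ainv *v x) \<bullet> (A *v (Ainv *v y))" by (rule symmetric_inner_commute[OF symmetric])
  finally show "x \<bullet> (Ainv *v y) = y \<bullet> (Ainv *v x)" by (simp add: inverse_cancel inner_commute)
next
  fix x
  show "0 \<le> x \<bullet> (Ainv *v x)"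
    using A_pos_def[of "Ainv *v x"] by (cases "Ainv *v x = 0") (auto simp: inverse_quadratic_form)
qed

lemma inverse_quadratic_form_eq_0_iff: "x \<bullet> (Ainv *v x) = 0 \<longleftrightarrow> x = 0"
  using A_pos_def[of "Ainv *v x"] inverse_cancel(1)[of x]
  by (cases "Ainv *v x = 0") (auto simp: inverse_quadratic_form)

lemma inverse_le_scaled_identity: "pos_semidef ((1 / \<mu>) *\<^sub>R mat 1 - Ainv)"
proof -
  have "\<mu> * (x \<bullet> (Ainv *v x)) \<le> x \<bullet> x" for x
  proof -
    define y where "y = Ainv *v x"
    have "\<mu> * (y \<bullet> y) \<le> x \<bullet> y" using lower[of y] by (simp add: y_def inverse_cancel inner_commute)
    then have "\<mu> * (\<mu> * (y \<bullet> y)) \<le> \<mu> * (x \<bullet> y)" using mu_pos by simp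
    moreover have "0 \<le> (x - \<mu> *\<^sub>R y) \<bullet> (x - \<mu> *\<^sub>R y)" by simp
    ultimately have "\<mu> * (x \<bullet> y) \<le> x \<bullet> x"
      by (simp add: algebra_simps inner_commute)
    then show ?thesis using mu_pos by (simp add: y_def inner_commute)
  qed
  moreover have "x \<bullet> (Ainv *v y) = y \<bullet> (Ainv *v x)" for x y
    using pos_semidef_inverse by (simp add: pos_semidef_def symmetric_iff_inner_commute)
  ultimately show ?thesis
    unfolding pos_semidef_def symmetric_iff_inner_commute using mu_pos
    by (auto simp: matrix_vector_mult_diff_rdistrib scaleR_matrix_vector_assoc[symmetric]
        inner_diff_right inner_commute field_simps)
qed

lemma dominating_symmetric: "pos_semidef (G - A) \<Longrightarrow> transpose G = G"
  using symmetric by (simp add: pos_semidef_def transpose_def vec_eq_iff)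

lemma dominating_quadratic_form: "pos_semidef (G - A) \<Longrightarrow> v \<bullet> (A *v v) \<le> v \<bullet> (G *v v)"
  unfolding pos_semidef_def by (auto simp: matrix_vector_mult_diff_rdistrib inner_diff_right)

lemma dominating_pos_def: "pos_semidef (G - A) \<Longrightarrow> v \<noteq> 0 \<Longrightarrow> 0 < v \<bullet> (G *v v)"
  using dominating_quadratic_form A_pos_def by (meson less_le_trans)

lemma inner_BFGS:
  assumes "transpose G = G"
  shows "x \<bullet> (BFGS A G u *v y) = x \<bullet> (G *v y) - (u \<bullet> (G *v y)) * (u \<bullet> (G *v x)) / (u \<bullet> (G *v u))
       + (u \<bullet> (A *v y)) * (u \<bullet> (A *v x)) / (u \<bullet> (A *v u))"
  using symmetric_inner_commute[OF assms, of x u] symmetric_inner_commute[OF symmetric, of x u]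
  by (simp add: BFGS_mult_vector inner_diff_right inner_add_right)

text \<open>The \<open>G\<close>-part of the update is the \<open>G\<close>-orthogonal projection away from \<open>u\<close>, the
  \<open>A\<close>-part is the \<open>A\<close>-best approximation along \<open>u\<close>; comparing both at \<open>v - \<alpha> u\<close> with
  \<open>\<alpha> = u\<^sup>TGv / u\<^sup>TGu\<close> transfers \<open>A \<preceq> G\<close> to the update.\<close>
lemma dominating_BFGS:
  assumes G: "pos_semidef (G - A)" and u: "u \<noteq> 0"
  shows "pos_semidef (BFGS A G u - A)"
proof -
  have symG: "transpose G = G" by (rule dominating_symmetric[OF G])
  have a: "0 < u \<bullet> (A *v u)" using A_pos_def u by blast
  have g: "0 < u \<bullet> (G *v u)" using dominating_pos_def[OF G u] .
  have ge: "v \<bullet> (A *v v) \<le> v \<bullet> (BFGS A G u *v v)" for v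
  proof -
    define \<alpha> where "\<alpha> = (u \<bullet> (G *v v)) / (u \<bullet> (G *v u))"
    define w where "w = v + (- \<alpha>) *\<^sub>R u"
    have "w \<bullet> (G *v w) = v \<bullet> (G *v v) - (u \<bullet> (G *v v))\<^sup>2 / (u \<bullet> (G *v u))"
      unfolding w_def quadratic_form_add_scaled[OF symG] using g
      by (simp add: \<alpha>_def field_simps power2_eq_square)
    moreover have "v \<bullet> (A *v v) - (u \<bullet> (A *v v))\<^sup>2 / (u \<bullet> (A *v u)) \<le> w \<bullet> (A *v w)"
    proof -
      have "0 \<le> (\<alpha> * (u \<bullet> (A *v u)) - u \<bullet> (A *v v))\<^sup>2" by simp
      then show ?thesis
        unfolding w_def quadratic_form_add_scaled[OF symmetric] using a
        by (simp add: field_simps power2_eq_square)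
    qed
    moreover have "w \<bullet> (A *v w) \<le> w \<bullet> (G *v w)" by (rule dominating_quadratic_form[OF G])
    ultimately show ?thesis by (simp add: inner_BFGS[OF symG] power2_eq_square)
  qed
  have "x \<bullet> ((BFGS A G u - A) *v y) = y \<bullet> ((BFGS A G u - A) *v x)" for x y
    using symmetric_inner_commute[OF symG, of x y] symmetric_inner_commute[OF symmetric, of x y]
    by (simp add: matrix_vector_mult_diff_rdistrib inner_diff_right inner_BFGS[OF symG] mult.commute)
  with ge show ?thesis
    by (simp add: pos_semidef_def symmetric_iff_inner_commute matrix_vector_mult_diff_rdistrib
        inner_diff_right)
qed


definition potential :: "real^'n^'n \<Rightarrow> real" where
  "potential G = trace (Ainv ** (G - A))"

definition potential_drop :: "real^'n^'n \<Rightarrow> real^'n \<Rightarrow> real" where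
  "potential_drop G u = (G *v u) \<bullet> (Ainv *v (G *v u)) / (u \<bullet> (G *v u)) - 1"

lemma potential_nonneg: "pos_semidef (G - A) \<Longrightarrow> 0 \<le> potential G"
  unfolding potential_def
  by (rule trace_mult_pos_semidef_nonneg) (use pos_semidef_inverse in \<open>simp_all add: pos_semidef_def\<close>)

lemma potential_le_trace: "pos_semidef (G - A) \<Longrightarrow> potential G \<le> trace (G - A) / \<mu>"
proof -
  assume G: "pos_semidef (G - A)"
  have "0 \<le> trace (((1 / \<mu>) *\<^sub>R mat 1 - Ainv) ** (G - A))"
    by (rule trace_mult_pos_semidef_nonneg[OF _ G])
      (use inverse_le_scaled_identity in \<open>simp add: pos_semidef_def\<close>)
  also have "\<dots> = trace (G - A) / \<mu> - potential G"
    by (simp add: potential_def matrix_diff_rdistrib trace_sub scalar_matrix_assoc[symmetric]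
        trace_scaleR divide_inverse)
  finally show ?thesis by simp
qed

lemma potential_BFGS:
  assumes "transpose G = G" and "u \<noteq> 0"
  shows "potential (BFGS A G u) = potential G - potential_drop G u"
proof -
  have "u \<bullet> (A *v u) \<noteq> 0" using A_pos_def[OF assms(2)] by simp
  then have "trace (Ainv ** ((1 / (u \<bullet> (A *v u))) *\<^sub>R outer (A *v u) (A *v u))) = 1"
    by (simp add: matrix_scalar_ac trace_scaleR trace_mult_outer scaleR_matrix_vector_assoc[symmetric]
        matrix_vector_mult_scaleR inverse_cancel inner_commute)
  then show ?thesis
    unfolding BFGS_eq_rank_two_update[OF symmetric assms(1)]
    by (simp add: potential_def potential_drop_def algebra_simps matrix_add_ldistrib matrix_diff_ldistrib
        trace_add trace_sub matrix_scalar_ac trace_scaleR trace_mult_outer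
        scaleR_matrix_vector_assoc[symmetric] matrix_vector_mult_scaleR)
qed


lemma inverse_form_split:
  "(G *v u) \<bullet> (Ainv *v (G *v u)) = u \<bullet> (A *v u) + 2 * (u \<bullet> ((G - A) *v u))
     + ((G - A) *v u) \<bullet> (Ainv *v ((G - A) *v u))"
proof -
  have "G *v u = A *v u + (G - A) *v u" by (simp add: matrix_vector_mult_diff_rdistrib)
  then show ?thesis
    using symmetric_inner_commute[of Ainv "A *v u" "(G - A) *v u"] pos_semidef_inverse
    by (simp add: pos_semidef_def matrix_vector_right_distrib inner_add_left inner_add_right
        inverse_cancel inner_commute)
qed

lemma potential_drop_eq_ratio:
  assumes "u \<noteq> 0" "pos_semidef (G - A)"
  defines "a \<equiv> u \<bullet> (A *v u)" and "\<delta> \<equiv> u \<bullet> ((G - A) *v u)"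
    and "e \<equiv> ((G - A) *v u) \<bullet> (Ainv *v ((G - A) *v u))"
  shows "potential_drop G u = (\<delta> + e) / (a + \<delta>)"
proof -
  have "u \<bullet> (G *v u) = a + \<delta>"
    by (simp add: a_def \<delta>_def matrix_vector_mult_diff_rdistrib inner_diff_right)
  moreover have "0 < a + \<delta>"
    using A_pos_def[OF assms(1)] assms(2) by (simp add: a_def \<delta>_def pos_semidef_def add_pos_nonneg)
  moreover have "(G *v u) \<bullet> (Ainv *v (G *v u)) = a + 2 * \<delta> + e"
    unfolding a_def \<delta>_def e_def by (rule inverse_form_split)
  ultimately show ?thesis by (simp add: potential_drop_def field_simps)
qed

lemma potential_drop_ge_ratio:
  assumes "u \<noteq> 0" "pos_semidef (G - A)"
  shows "u \<bullet> ((G - A) *v u) / (u \<bullet> (A *v u)) \<le> potential_drop G u" and "0 \<le> potential_drop G u"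
proof -
  define a \<delta> e where "a = u \<bullet> (A *v u)" and "\<delta> = u \<bullet> ((G - A) *v u)"
    and "e = ((G - A) *v u) \<bullet> (Ainv *v ((G - A) *v u))"
  have a: "0 < a" using A_pos_def[OF assms(1)] by (simp add: a_def)
  have \<delta>: "0 \<le> \<delta>" using assms(2) by (simp add: \<delta>_def pos_semidef_def)
  have e: "0 \<le> e" using pos_semidef_inverse by (simp add: e_def pos_semidef_def)
  have "\<delta>\<^sup>2 \<le> a * e"
    using pos_semidef_cauchy_schwarz[OF A_pos_semidef, of u "Ainv *v ((G - A) *v u)"]
    by (simp add: a_def \<delta>_def e_def inverse_cancel inner_commute)
  then have "\<delta> / a \<le> (\<delta> + e) / (a + \<delta>)"
    using a \<delta> by (simp add: field_simps power2_eq_square)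
  then show "u \<bullet> ((G - A) *v u) / (u \<bullet> (A *v u)) \<le> potential_drop G u"
    using potential_drop_eq_ratio[OF assms] by (simp add: a_def \<delta>_def e_def)
  show "0 \<le> potential_drop G u"
    using potential_drop_eq_ratio[OF assms] a \<delta> e by (simp add: a_def \<delta>_def e_def)
qed


lemma greedy_diagonal_bound:
  assumes "pos_semidef (G - A)" and "greedy_vec A G u"
  shows "axis i 1 \<bullet> ((G - A) *v axis i 1) \<le> L * (u \<bullet> ((G - A) *v u) / (u \<bullet> (A *v u)))"
proof -
  define a \<delta> a\<^sub>i \<delta>\<^sub>i where "a = u \<bullet> (A *v u)" and "\<delta> = u \<bullet> ((G - A) *v u)"
    and "a\<^sub>i = axis i 1 \<bullet> (A *v axis i 1)" and "\<delta>\<^sub>i = axis i 1 \<bullet> ((G - A) *v axis i 1)"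
  have "u \<noteq> 0" using assms(2) by (auto simp: greedy_vec_def)
  then have a: "0 < a" using A_pos_def by (simp add: a_def)
  have \<delta>: "0 \<le> \<delta>" using assms(1) by (simp add: \<delta>_def pos_semidef_def)
  have a\<^sub>i: "0 < a\<^sub>i" "a\<^sub>i \<le> L"
    using A_pos_def[of "axis i 1"] upper[of "axis i 1"] by (simp_all add: a\<^sub>i_def inner_axis_axis)
  have "(a\<^sub>i + \<delta>\<^sub>i) / a\<^sub>i \<le> (a + \<delta>) / a"
    using assms(2)
    by (simp add: greedy_vec_def a_def \<delta>_def a\<^sub>i_def \<delta>\<^sub>i_def matrix_vector_mult_diff_rdistrib
        inner_diff_right)
  then have "\<delta>\<^sub>i \<le> a\<^sub>i * (\<delta> / a)" using a a\<^sub>i by (simp add: field_simps)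
  also have "\<dots> \<le> L * (\<delta> / a)" using a\<^sub>i a \<delta> by (intro mult_right_mono) simp_all
  finally show ?thesis by (simp add: a_def \<delta>_def \<delta>\<^sub>i_def)
qed

lemma potential_greedy_BFGS:
  assumes G: "pos_semidef (G - A)" and u: "greedy_vec A G u"
  shows "potential (BFGS A G u) \<le> (1 - \<mu> / (real CARD('n) * L)) * potential G"
proof -
  have "u \<noteq> 0" using u by (auto simp: greedy_vec_def)
  define r where "r = u \<bullet> ((G - A) *v u) / (u \<bullet> (A *v u))"
  have L: "0 < L" using mu_pos mu_le_L by simp
  have "potential G \<le> trace (G - A) / \<mu>" by (rule potential_le_trace[OF G])
  also have "\<dots> \<le> (\<Sum>i\<in>(UNIV::'n set). L * r) / \<mu>"
    unfolding trace_eq_sum_axis r_def using mu_pos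
    by (intro divide_right_mono sum_mono greedy_diagonal_bound[OF G u]) simp
  also have "\<dots> = real CARD('n) * L * r / \<mu>" by simp
  also have "\<dots> \<le> real CARD('n) * L * potential_drop G u / \<mu>"
    using potential_drop_ge_ratio(1)[OF \<open>u \<noteq> 0\<close> G] L mu_pos
    by (intro divide_right_mono mult_left_mono) (simp_all add: r_def)
  finally have "\<mu> / (real CARD('n) * L) * potential G \<le> potential_drop G u"
    using L mu_pos by (simp add: field_simps)
  then show ?thesis
    using potential_BFGS[OF dominating_symmetric[OF G] \<open>u \<noteq> 0\<close>] by (simp add: algebra_simps)
qed

text \<open>After the step \<open>s = -G\<^sup>-\<^sup>1 g\<close> the new gradient is \<open>g + A s = -(G - A) s\<close>, so in the
  notation of \<open>potential_drop_eq_ratio\<close> the squared Newton decrement drops from \<open>a + 2\<delta> + e\<close> to \<open>e\<close>,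
  while \<open>\<theta> = (\<delta> + e)/(a + \<delta>)\<close>.\<close>
lemma newton_decrement_quasi_newton_step:
  assumes G: "pos_semidef (G - A)" and g: "quad_grad A b x \<noteq> 0"
    and x': "x' = x - matrix_inv G *v quad_grad A b x"
  shows "x' - x \<noteq> 0"
    and "newton_decrement A b x' ^ 2 \<le> potential_drop G (x' - x) * newton_decrement A b x ^ 2"
proof -
  define s where "s = x' - x"
  have Gs: "G *v s = - quad_grad A b x"
    using invertible_matrix_inv_cancel(1)[OF invertible_if_pos_def[OF dominating_pos_def[OF G]]]
    by (simp add: s_def x' matrix_vector_mult_minus)
  then show s: "x' - x \<noteq> 0" using g by (auto simp: s_def)
  have g': "quad_grad A b x' = - ((G - A) *v s)"
    using Gs by (simp add: quad_grad_def s_def matrix_vector_mult_diff_distrib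
        matrix_vector_mult_diff_rdistrib algebra_simps)
  define a \<delta> e where "a = s \<bullet> (A *v s)" and "\<delta> = s \<bullet> ((G - A) *v s)"
    and "e = ((G - A) *v s) \<bullet> (Ainv *v ((G - A) *v s))"
  have nonneg: "0 < a" "0 \<le> \<delta>" "0 \<le> e"
    using A_pos_def[OF s] G pos_semidef_inverse by (simp_all add: s_def a_def \<delta>_def e_def pos_semidef_def)
  have sq: "newton_decrement A b y ^ 2 = quad_grad A b y \<bullet> (Ainv *v quad_grad A b y)" for y
    using pos_semidef_inverse by (simp add: newton_decrement_def pos_semidef_def)
  have "newton_decrement A b x' ^ 2 = e"
    by (simp add: sq g' e_def matrix_vector_mult_minus)
  moreover have "newton_decrement A b x ^ 2 = a + 2 * \<delta> + e"
    using inverse_form_split[of G s] Gs by (simp add: sq a_def \<delta>_def e_def matrix_vector_mult_minus)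
  moreover have "potential_drop G s = (\<delta> + e) / (a + \<delta>)"
    using potential_drop_eq_ratio[OF _ G] s by (simp add: s_def a_def \<delta>_def e_def)
  moreover have "e \<le> (\<delta> + e) / (a + \<delta>) * (a + 2 * \<delta> + e)"
  proof -
    have "e * (a + \<delta>) \<le> (\<delta> + e) * (a + 2 * \<delta> + e)" using nonneg by (simp add: algebra_simps)
    then show ?thesis using nonneg by (simp add: field_simps)
  qed
  ultimately show "newton_decrement A b x' ^ 2 \<le> potential_drop G (x' - x) * newton_decrement A b x ^ 2"
    by (simp add: s_def)
qed

end

lemma prod_le_mean_power:
  fixes w :: "'a \<Rightarrow> real"
  assumes "finite I" "I \<noteq> {}" and w: "\<And>i. i \<in> I \<Longrightarrow> 0 \<le> w i" and S: "(\<Sum>i\<in>I. w i) \<le> S"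
  shows "(\<Prod>i\<in>I. w i) \<le> (S / card I) ^ card I"
proof -
  have n: "0 < card I" using assms(1,2) by (simp add: card_gt_0_iff)
  have P: "0 \<le> (\<Prod>i\<in>I. w i)" using w by (simp add: prod_nonneg)
  have "(\<Prod>i\<in>I. w i) powr (1 / card I) \<le> (\<Sum>i\<in>I. w i / card I)"
    using arith_geom_mean[OF assms(1,2)] w by blast
  also have "\<dots> \<le> S / card I" using S by (simp add: sum_divide_distrib[symmetric] divide_right_mono)
  finally have "((\<Prod>i\<in>I. w i) powr (1 / card I)) ^ card I \<le> (S / card I) ^ card I"
    by (intro power_mono) simp_all
  also have "((\<Prod>i\<in>I. w i) powr (1 / card I)) ^ card I = (\<Prod>i\<in>I. w i)"
    using n P by (simp add: powr_realpow'[symmetric] powr_powr)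
  finally show ?thesis .
qed

text \<open>Rescaling \<open>w\<^sub>k = \<theta>\<^sub>k / q\<^sup>k\<close> makes \<open>\<sigma>\<^sub>k / q\<^sup>k + (\<Sum>j<k. w\<^sub>j)\<close> nonincreasing, so
  \<open>(\<Sum>k<t. w\<^sub>k) \<le> \<sigma>\<^sub>0\<close> and AM-GM bounds \<open>\<Prod>k<t. \<theta>\<^sub>k\<close>.\<close>
lemma superlinear_rate_from_potential:
  fixes \<Lambda> \<sigma> \<theta> :: "nat \<Rightarrow> real" and q S :: real
  assumes q: "0 < q"
    and \<sigma>_step: "\<And>k. \<sigma> (Suc k) \<le> q * (\<sigma> k - \<theta> k)"
    and \<Lambda>_step: "\<And>k. \<Lambda> (Suc k) \<le> \<theta> k * \<Lambda> k"
    and nonneg: "\<And>k. 0 \<le> \<sigma> k" "\<And>k. 0 \<le> \<theta> k" "\<And>k. 0 \<le> \<Lambda> k"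
    and S: "\<sigma> 0 \<le> S" and t: "1 \<le> t"
  shows "\<Lambda> t \<le> q ^ (t * (t - 1) div 2) * (S / t) ^ t * \<Lambda> 0"
proof -
  have \<Lambda>_prod: "\<Lambda> n \<le> (\<Prod>k<n. \<theta> k) * \<Lambda> 0" for n
  proof (induction n)
    case (Suc n)
    have "\<Lambda> (Suc n) \<le> \<theta> n * \<Lambda> n" by (rule \<Lambda>_step)
    also have "\<dots> \<le> \<theta> n * ((\<Prod>k<n. \<theta> k) * \<Lambda> 0)"
      using Suc nonneg(2) by (rule mult_left_mono)
    finally show ?case by (simp add: mult_ac)
  qed simp
  define w where "w k = \<theta> k / q ^ k" for k
  have potential: "(\<Sum>k<n. w k) \<le> \<sigma> 0 - \<sigma> n / q ^ n" for n
  proof (induction n)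
    case (Suc n)
    have "\<sigma> (Suc n) / q ^ Suc n \<le> (\<sigma> n - \<theta> n) / q ^ n"
      using \<sigma>_step[of n] q by (simp add: field_simps)
    then show ?case using Suc by (simp add: w_def diff_divide_distrib)
  qed simp
  have "(\<Sum>k<t. w k) \<le> S"
    using potential[of t] nonneg(1)[of t] q S by (smt (verit) divide_nonneg_pos zero_less_power)
  then have "(\<Prod>k<t. w k) \<le> (S / t) ^ t"
    using prod_le_mean_power[of "{..<t}" w S] t q nonneg(2) by (simp add: w_def lessThan_empty_iff)
  moreover have "(\<Prod>k<t. \<theta> k) = (\<Prod>k<t. w k) * q ^ (t * (t - 1) div 2)"
  proof -
    have "(\<Prod>k<t. \<theta> k) = (\<Prod>k<t. w k * q ^ k)" using q by (simp add: w_def)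
    also have "\<dots> = (\<Prod>k<t. w k) * q ^ (\<Sum>k<t. k)" by (simp add: prod.distrib power_sum)
    also have "(\<Sum>k<t. k) = t * (t - 1) div 2"
      using gauss_sum_nat[of "t - 1"] t by (simp add: atLeast0AtMost lessThan_Suc_atMost[symmetric]
          mult.commute)
    finally show ?thesis .
  qed
  ultimately have "(\<Prod>k<t. \<theta> k) \<le> (S / t) ^ t * q ^ (t * (t - 1) div 2)"
    using q by (simp add: mult_right_mono)
  then have "(\<Prod>k<t. \<theta> k) * \<Lambda> 0 \<le> (S / t) ^ t * q ^ (t * (t - 1) div 2) * \<Lambda> 0"
    using nonneg(3) by (rule mult_right_mono)
  with \<Lambda>_prod[of t] show ?thesis by (simp add: mult_ac)
qed

lemma root_4_power_double:
  assumes "0 \<le> (q::real)"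
  shows "root 4 (q ^ (2 * m)) = sqrt (q ^ m)"
proof -
  have "root 4 (q ^ (2 * m)) = root 2 (root 2 ((q ^ m)\<^sup>2))"
    using real_root_mult_exp[of 2 2] by (simp add: power_mult mult.commute)
  also have "root 2 ((q ^ m)\<^sup>2) = q ^ m" using assms by (simp add: real_root_pos2)
  finally show ?thesis by (simp add: sqrt_def)
qed

locale sharpened_bfgs_run = spectral_bounds A \<mu> L for A :: "real^'n^'n" and \<mu> L +
  fixes b :: "real^'n" and x :: "nat \<Rightarrow> real^'n" and G :: "nat \<Rightarrow> real^'n^'n"
  assumes run: "sharpened_bfgs A b L x G"
    and grad_nonzero: "\<And>t. quad_grad A b (x t) \<noteq> 0"
begin

definition Gbar :: "nat \<Rightarrow> real^'n^'n" where
  "Gbar t = BFGS A (G t) (x (Suc t) - x t)"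

lemma G_0: "G 0 = L *\<^sub>R mat 1"
  and x_Suc: "x (Suc t) = x t - matrix_inv (G t) *v quad_grad A b (x t)"
  and greedy_update: "\<exists>u. greedy_vec A (Gbar t) u \<and> G (Suc t) = BFGS A (Gbar t) u"
  using run unfolding sharpened_bfgs_def Gbar_def Let_def by blast+

lemma dominating_G: "pos_semidef (G t - A)"
  and dominating_Gbar: "pos_semidef (Gbar t - A)"
proof -
  have step: "pos_semidef (Gbar t - A)" if "pos_semidef (G t - A)" for t
    unfolding Gbar_def
    by (rule dominating_BFGS[OF that newton_decrement_quasi_newton_step(1)[OF that grad_nonzero x_Suc]])
  show G: "pos_semidef (G t - A)"
  proof (induction t)
    case 0
    show ?case
      using upper symmetric
      by (simp add: G_0 pos_semidef_def symmetric_iff_inner_commute matrix_vector_mult_diff_rdistrib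
          inner_diff_right scaleR_matrix_vector_assoc[symmetric] inner_commute)
  next
    case (Suc t)
    obtain u where "greedy_vec A (Gbar t) u" "G (Suc t) = BFGS A (Gbar t) u"
      using greedy_update by blast
    then show ?case using dominating_BFGS[OF step[OF Suc]] by (auto simp: greedy_vec_def)
  qed
  show "pos_semidef (Gbar t - A)" by (rule step[OF G])
qed

abbreviation step_drop :: "nat \<Rightarrow> real" where
  "step_drop t \<equiv> potential_drop (G t) (x (Suc t) - x t)"

lemma potential_Gbar: "potential (Gbar t) = potential (G t) - step_drop t"
  unfolding Gbar_def
  by (rule potential_BFGS[OF dominating_symmetric[OF dominating_G]
        newton_decrement_quasi_newton_step(1)[OF dominating_G grad_nonzero x_Suc]])

lemma potential_Suc:
  "potential (G (Suc t)) \<le> (1 - \<mu> / (real CARD('n) * L)) * (potential (G t) - step_drop t)"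
proof -
  obtain u where "greedy_vec A (Gbar t) u" "G (Suc t) = BFGS A (Gbar t) u"
    using greedy_update by blast
  then show ?thesis using potential_greedy_BFGS[OF dominating_Gbar] by (simp add: potential_Gbar)
qed

lemma newton_decrement_Suc:
  "newton_decrement A b (x (Suc t)) ^ 2 \<le> step_drop t * newton_decrement A b (x t) ^ 2"
  by (rule newton_decrement_quasi_newton_step(2)[OF dominating_G grad_nonzero x_Suc])

lemma step_drop_nonneg: "0 \<le> step_drop t"
  using newton_decrement_quasi_newton_step(1)[OF dominating_G grad_nonzero x_Suc]
  by (rule potential_drop_ge_ratio(2)[OF _ dominating_G])

lemma potential_G_0: "potential (G 0) \<le> real CARD('n) * L / \<mu>"
proof -
  have "potential (G 0) \<le> trace (G 0 - A) / \<mu>" by (rule potential_le_trace[OF dominating_G])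
  also have "\<dots> \<le> (\<Sum>i\<in>(UNIV::'n set). L) / \<mu>"
    unfolding trace_eq_sum_axis using mu_pos A_pos_semidef
    by (intro divide_right_mono sum_mono)
      (simp_all add: G_0 pos_semidef_def matrix_vector_mult_diff_rdistrib inner_diff_right
        scaleR_matrix_vector_assoc[symmetric] inner_axis_axis)
  finally show ?thesis by simp
qed

lemma newton_decrement_pos: "0 < newton_decrement A b (x t)"
  using grad_nonzero[of t] pos_semidef_inverse inverse_quadratic_form_eq_0_iff
  by (simp add: newton_decrement_def pos_semidef_def order_less_le)

text \<open>If the rate were \<open>0\<close>, then \<open>\<sigma>(G\<^sub>1) = 0\<close> would force \<open>\<theta>\<^sub>1 = 0\<close> and hence \<open>x\<^sub>2\<close> to be the
  minimiser, contradicting the nonvanishing gradient.\<close>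
lemma greedy_rate_pos: "0 < 1 - \<mu> / (real CARD('n) * L)"
proof (rule ccontr)
  assume "\<not> ?thesis"
  moreover have "\<mu> \<le> real CARD('n) * L"
  proof -
    have "\<mu> \<le> 1 * L" using mu_le_L by simp
    also have "\<dots> \<le> real CARD('n) * L" using mu_le_L mu_pos by (intro mult_right_mono) simp_all
    finally show ?thesis .
  qed
  ultimately have "1 - \<mu> / (real CARD('n) * L) = 0" using mu_pos mu_le_L by (simp add: field_simps)
  then have "potential (G 1) \<le> 0" using potential_Suc[of 0] by (simp only: One_nat_def mult_zero_left)
  then have "step_drop 1 \<le> 0"
    using potential_nonneg[OF dominating_G, of 1] potential_nonneg[OF dominating_Gbar, of 1]
      potential_Gbar[of 1]
    by simp
  then have "step_drop 1 * newton_decrement A b (x 1) ^ 2 \<le> 0"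
    by (simp add: mult_nonpos_nonneg)
  then have "newton_decrement A b (x (Suc 1)) ^ 2 \<le> 0"
    by (rule order_trans[OF newton_decrement_Suc])
  then show False using newton_decrement_pos[of "Suc 1"] by simp
qed

lemma newton_decrement_sq_bound:
  assumes "1 \<le> t"
  shows "newton_decrement A b (x t) ^ 2
    \<le> (1 - \<mu> / (real CARD('n) * L)) ^ (t * (t - 1) div 2) * (real CARD('n) * L / (real t * \<mu>)) ^ t
       * newton_decrement A b (x 0) ^ 2"
  using superlinear_rate_from_potential[OF greedy_rate_pos potential_Suc newton_decrement_Suc
      potential_nonneg[OF dominating_G] step_drop_nonneg zero_le_power2 potential_G_0 assms]
  by (simp add: mult.commute)

end

theorem theorem2:
  fixes A :: "real^'n^'n" and b :: "real^'n" and \<mu> L :: real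
    and x :: "nat \<Rightarrow> real^'n" and G :: "nat \<Rightarrow> real^'n^'n"
  assumes "0 < \<mu>" and "\<mu> \<le> L"
    and "transpose A = A"
    and "\<And>v. \<mu> * (v \<bullet> v) \<le> v \<bullet> (A *v v)"
    and "\<And>v. v \<bullet> (A *v v) \<le> L * (v \<bullet> v)"
    and "sharpened_bfgs A b L x G"
    and "\<And>t. quad_grad A b (x t) \<noteq> 0"
    and "1 \<le> t"
  shows "newton_decrement A b (x t) \<le>
           root 4 ((1 - \<mu> / (real CARD('n) * L)) ^ (t * (t - 1)))
           * sqrt ((real CARD('n) * L / (real t * \<mu>)) ^ t)
           * newton_decrement A b (x 0)"
proof -
  interpret sharpened_bfgs_run A \<mu> L b x G
    using assms(1,3-7) by unfold_locales
  define q where "q = 1 - \<mu> / (real CARD('n) * L)"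
  have "t * (t - 1) = 2 * (t * (t - 1) div 2)" by (cases t) auto
  then have "root 4 (q ^ (t * (t - 1))) = sqrt (q ^ (t * (t - 1) div 2))"
    using greedy_rate_pos root_4_power_double[of q] by (metis q_def less_imp_le)
  moreover have "newton_decrement A b (x t)
      \<le> sqrt (q ^ (t * (t - 1) div 2) * (real CARD('n) * L / (real t * \<mu>)) ^ t
               * newton_decrement A b (x 0) ^ 2)"
    using newton_decrement_sq_bound[OF assms(8)] newton_decrement_pos[of t]
    by (simp add: q_def real_le_rsqrt)
  ultimately show ?thesis
    using newton_decrement_pos[of 0] by (simp add: q_def real_sqrt_mult)
qed

end
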